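(* Consider standard (linear-kernel) $k$-means on $\mathbb{R}$. For every $m\in\mathbb{N}$ there exist $k\in\mathbb{N}$ and a finite dataset $X\subset\mathbb{R}$ such that: the price of explainability of $X$ is $p(X)=1$; the tree produced by IMM (with reference clustering an optimal $k$-means clustering of $X$) attains $p(T_{IMM},X)=1$; but ExKMC initialized on the empty tree and run until the tree has $k$ leaves constructs a decision tree $T$ with $p(T,X)\ge m$.
   Context: $k$-means cost of a partition $C_1,\dots,C_k$ of $X$: $\sum_l\sum_{x\in C_l}\|x-c_l\|^2$ with $c_l$ the mean of $C_l$; $\mathrm{cost}_{opt}(X)$ is its minimum. The reference clustering is an optimal $k$-means partition with centers $c_1,\dots,c_k$ (its means); for $x\in X$, $c(x)$ is the center of its cluster. For a decision tree $T$ whose $k$ leaves partition $X$, $\mathrm{cost}(T,X)$ is the $k$-means cost of the leaf partition and $p(T,X)=\mathrm{cost}(T,X)/\mathrm{cost}_{opt}(X)$; $p(X)=\min_T p(T,X)$ over interpretable decision trees with $k$ leaves, i.e. trees where each internal node splits its data $X^u$ into $\{x\in X^u:x_i\in[\theta_1,\theta_2]\}$ and its complement for some coordinate $i$ and reals $\theta_1<\theta_2$. IMM: build a tree top-down; each node $u$ holds points $X^u$ and centers $\mathcal{M}^u$ (root: all). If $|\mathcal{M}^u|=1$, $u$ is a leaf; otherwise choose, among threshold cuts $x_i\le\theta$ splitting $\mathcal{M}^u$ into two nonempty parts, one minimizing the number of mistakes (points $x\in X^u$ with $c(x)\in\mathcal{M}^u$ lying on the opposite side of the cut from $c(x)$),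 and pass points and centers to the children accordingly. ExKMC: start with one leaf containing $X$. While the number of leaves is less than $k$: for each leaf $u$ (data $X^u$) and each cut $(i,\theta)$ with $X^u_L=\{x\in X^u:x_i\le\theta\}$, $X^u_R=\{x\in X^u:x_i>\theta\}$, let $\mathrm{cost}_{exkmc}(u,i,\theta)=\min_{j,l\in[k]}\big(\sum_{x\in X^u_L}\|x-c_j\|^2+\sum_{x\in X^u_R}\|x-c_l\|^2\big)$; choose the leaf and cut maximizing $\min_{j\in[k]}\sum_{x\in X^u}\|x-c_j\|^2-\mathrm{cost}_{exkmc}(u,i,\theta)$, and replace that leaf by its two children $X^u_L,X^u_R$. *)

theory Defs
  imports Complex_Main
begin

definition mean :: "real set \<Rightarrow> real" where
  "mean S = (\<Sum>x\<in>S. x) / real (card S)"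

definition cluster_cost :: "real set \<Rightarrow> real" where
  "cluster_cost S = (\<Sum>x\<in>S. (x - mean S)^2)"

definition is_kclustering :: "real set \<Rightarrow> nat \<Rightarrow> (nat \<Rightarrow> real set) \<Rightarrow> bool" where
  "is_kclustering X k C \<longleftrightarrow>
     (\<forall>l<k. C l \<noteq> {}) \<and> (\<Union>l<k. C l) = X \<and>
     (\<forall>l<k. \<forall>l'<k. l \<noteq> l' \<longrightarrow> C l \<inter> C l' = {})"

definition kmeans_cost :: "nat \<Rightarrow> (nat \<Rightarrow> real set) \<Rightarrow> real" where
  "kmeans_cost k C = (\<Sum>l<k. cluster_cost (C l))"

definition cost_opt :: "real set \<Rightarrow> nat \<Rightarrow> real" where
  "cost_opt X k = Inf {kmeans_cost k C | C. is_kclustering X k C}"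

definition optimal_clustering :: "real set \<Rightarrow> nat \<Rightarrow> (nat \<Rightarrow> real set) \<Rightarrow> bool" where
  "optimal_clustering X k C \<longleftrightarrow> is_kclustering X k C \<and> kmeans_cost k C = cost_opt X k"

definition ref_center :: "nat \<Rightarrow> (nat \<Rightarrow> real set) \<Rightarrow> real \<Rightarrow> real" where
  "ref_center k C x = mean (C (SOME l. l < k \<and> x \<in> C l))"

definition partition_cost :: "real set list \<Rightarrow> real" where
  "partition_cost Ls = sum_list (map cluster_cost Ls)"

text \<open>INode a b T1 T2: points x with x in [a,b] go to T1, the others to T2.\<close>
datatype itree = ILeaf | INode real real itree itree

fun ileaves :: "itree \<Rightarrow> real set \<Rightarrow> real set list" where
  "ileaves ILeaf S = [S]"
| "ileaves (INode a b l r) S =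
     ileaves l {x\<in>S. a \<le> x \<and> x \<le> b} @ ileaves r {x\<in>S. \<not> (a \<le> x \<and> x \<le> b)}"

fun interpretable :: "itree \<Rightarrow> bool" where
  "interpretable ILeaf = True"
| "interpretable (INode a b l r) = (a < b \<and> interpretable l \<and> interpretable r)"

definition price_itree :: "itree \<Rightarrow> real set \<Rightarrow> nat \<Rightarrow> real" where
  "price_itree T X k = partition_cost (ileaves T X) / cost_opt X k"

definition price_expl :: "real set \<Rightarrow> nat \<Rightarrow> real" where
  "price_expl X k = Inf {price_itree T X k | T. interpretable T \<and> length (ileaves T X) = k}"

text \<open>TNode \<theta> T1 T2: points x with x \<le> \<theta> go to T1, the others to T2.\<close>
datatype ttree = TLeaf | TNode real ttree ttree

fun tleaves :: "ttree \<Rightarrow> real set \<Rightarrow> real set list" where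
  "tleaves TLeaf S = [S]"
| "tleaves (TNode t l r) S = tleaves l {x\<in>S. x \<le> t} @ tleaves r {x\<in>S. x > t}"

fun nleaves :: "ttree \<Rightarrow> nat" where
  "nleaves TLeaf = 1"
| "nleaves (TNode t l r) = nleaves l + nleaves r"

definition price_ttree :: "ttree \<Rightarrow> real set \<Rightarrow> nat \<Rightarrow> real" where
  "price_ttree T X k = partition_cost (tleaves T X) / cost_opt X k"

definition mistakes :: "(real \<Rightarrow> real) \<Rightarrow> real set \<Rightarrow> real set \<Rightarrow> real \<Rightarrow> nat" where
  "mistakes c U M \<theta> = card {x\<in>U. c x \<in> M \<and> ((x \<le> \<theta>) \<noteq> (c x \<le> \<theta>))}"

definition splits_centers :: "real set \<Rightarrow> real \<Rightarrow> bool" where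
  "splits_centers M \<theta> \<longleftrightarrow> {\<mu>\<in>M. \<mu> \<le> \<theta>} \<noteq> {} \<and> {\<mu>\<in>M. \<mu> > \<theta>} \<noteq> {}"

text \<open>imm c U M T: IMM (with any admissible tie-breaking), started at a node holding
  points U and centers M, can output the subtree T.\<close>
inductive imm :: "(real \<Rightarrow> real) \<Rightarrow> real set \<Rightarrow> real set \<Rightarrow> ttree \<Rightarrow> bool" where
  imm_leaf: "card M = 1 \<Longrightarrow> imm c U M TLeaf"
| imm_node: "\<lbrakk> card M \<noteq> 1; splits_centers M \<theta>;
              \<forall>\<theta>'. splits_centers M \<theta>' \<longrightarrow> mistakes c U M \<theta> \<le> mistakes c U M \<theta>';
              imm c {x\<in>U. x \<le> \<theta>} {\<mu>\<in>M. \<mu> \<le> \<theta>} Tl;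
              imm c {x\<in>U. x > \<theta>} {\<mu>\<in>M. \<mu> > \<theta>} Tr \<rbrakk>
             \<Longrightarrow> imm c U M (TNode \<theta> Tl Tr)"

definition imm_tree :: "real set \<Rightarrow> nat \<Rightarrow> (nat \<Rightarrow> real set) \<Rightarrow> ttree \<Rightarrow> bool" where
  "imm_tree X k C T \<longleftrightarrow> imm (ref_center k C) X ((\<lambda>l. mean (C l)) ` {..<k}) T"

text \<open>Replace the i-th leaf (left-to-right, from 0) by a cut at \<theta> with two leaf children.\<close>
fun repl :: "ttree \<Rightarrow> nat \<Rightarrow> real \<Rightarrow> ttree" where
  "repl TLeaf i \<theta> = (if i = 0 then TNode \<theta> TLeaf TLeaf else TLeaf)"
| "repl (TNode t l r) i \<theta> =
     (if i < nleaves l then TNode t (repl l i \<theta>) r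
      else TNode t l (repl r (i - nleaves l) \<theta>))"

definition sqdist_sum :: "real set \<Rightarrow> real \<Rightarrow> real" where
  "sqdist_sum A c = (\<Sum>x\<in>A. (x - c)^2)"

text \<open>cen l = c_l, the reference centers, l < k.\<close>
definition exkmc_cost :: "nat \<Rightarrow> (nat \<Rightarrow> real) \<Rightarrow> real set \<Rightarrow> real \<Rightarrow> real" where
  "exkmc_cost k cen U \<theta> =
     Min {sqdist_sum {x\<in>U. x \<le> \<theta>} (cen j) + sqdist_sum {x\<in>U. x > \<theta>} (cen l) | j l. j < k \<and> l < k}"

definition exkmc_gain :: "nat \<Rightarrow> (nat \<Rightarrow> real) \<Rightarrow> real set \<Rightarrow> real \<Rightarrow> real" where
  "exkmc_gain k cen U \<theta> = Min {sqdist_sum U (cen j) | j. j < k} - exkmc_cost k cen U \<theta>"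

text \<open>One ExKMC step on data X: split a leaf with a gain-maximizing cut (any tie-breaking).\<close>
definition exkmc_step :: "nat \<Rightarrow> (nat \<Rightarrow> real) \<Rightarrow> real set \<Rightarrow> ttree \<Rightarrow> ttree \<Rightarrow> bool" where
  "exkmc_step k cen X T T' \<longleftrightarrow>
     (\<exists>i \<theta>. i < nleaves T \<and> T' = repl T i \<theta> \<and>
        (\<forall>i' \<theta>'. i' < nleaves T \<longrightarrow>
           exkmc_gain k cen (tleaves T X ! i') \<theta>' \<le> exkmc_gain k cen (tleaves T X ! i) \<theta>))"

definition exkmc_tree :: "real set \<Rightarrow> nat \<Rightarrow> (nat \<Rightarrow> real set) \<Rightarrow> ttree \<Rightarrow> bool" where
  "exkmc_tree X k C T \<longleftrightarrow>
     (exkmc_step k (\<lambda>l. mean (C l)) X)\<^sup>*\<^sup>* TLeaf T \<and> nleaves T = k"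

end

theory Submission
  imports Defs
begin

text \<open>
  The data set consists of the three twins {a - 1, a + 1} centred at a = -D, 0, D, with D \<ge> 10.
  A cover of it by three blocks either has a block meeting two twins, which costs at least
  (D - 2)^2 / 2 \<ge> 32, or its blocks are exactly the twins, of total cost 6. Hence the twins form
  the unique optimal clustering, and an interval tree realises them. Because the twins lie on the
  line in the order of their centres, every node of IMM admits a mistake-free cut, so IMM returns
  the twins as well. ExKMC, however, scores cuts against the fixed centres -D, 0, D, and its greedy
  first cut halves the data between -1 and 1, which splits the middle twin for good; whichever half
  it cuts next, the other half stays a leaf containing two points at distance D - 2. With
  D = m + 10 this leaf alone costs more than 6 m.
\<close>

section \<open>k-means costs\<close>

lemma cluster_cost_eq_sqdist_sum_mean: "cluster_cost S = sqdist_sum S (mean S)"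
  by (simp add: cluster_cost_def sqdist_sum_def)

lemma cluster_cost_nonneg: "0 \<le> cluster_cost S"
  unfolding cluster_cost_def by (simp add: sum_nonneg)

lemma cluster_cost_ge_half_sq_dist:
  assumes "finite S" "x \<in> S" "y \<in> S"
  shows "(x - y)^2 / 2 \<le> cluster_cost S"
proof (cases "x = y")
  case True
  then show ?thesis using cluster_cost_nonneg by simp
next
  case False
  define \<mu> where "\<mu> = mean S"
  have "(x - y)^2 + (x + y - 2 * \<mu>)^2 = 2 * ((x - \<mu>)^2 + (y - \<mu>)^2)"
    by (simp add: power2_eq_square algebra_simps)
  then have "(x - y)^2 \<le> 2 * ((x - \<mu>)^2 + (y - \<mu>)^2)"
    using zero_le_power2[of "x + y - 2 * \<mu>"] by linarith
  then have "(x - y)^2 / 2 \<le> (x - \<mu>)^2 + (y - \<mu>)^2" by simp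
  also have "\<dots> = (\<Sum>z\<in>{x, y}. (z - \<mu>)^2)" using False by simp
  also have "\<dots> \<le> cluster_cost S"
    unfolding cluster_cost_def \<mu>_def by (rule sum_mono2) (use assms in auto)
  finally show ?thesis .
qed

lemma partition_cost_eq_kmeans_cost: "partition_cost L = kmeans_cost (length L) ((!) L)"
  by (simp add: partition_cost_def kmeans_cost_def sum_list_sum_nth atLeast0LessThan)

lemma partition_cost_append: "partition_cost (L @ L') = partition_cost L + partition_cost L'"
  by (simp add: partition_cost_def)

lemma cluster_cost_le_partition_cost: "B \<in> set L \<Longrightarrow> cluster_cost B \<le> partition_cost L"
  unfolding partition_cost_def by (rule member_le_sum_list) (auto simp: cluster_cost_nonneg)

lemma Union_set_ileaves: "\<Union>(set (ileaves T S)) = S"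
  by (induction T arbitrary: S) auto

lemma Union_lessThan_nth: "(\<Union>i<length L. L ! i) = \<Union>(set L)"
  unfolding set_conv_nth by blast

lemma ref_center_eq_mean:
  assumes "is_kclustering X k C" "l < k" "x \<in> C l"
  shows "ref_center k C x = mean (C l)"
proof -
  have "(SOME l. l < k \<and> x \<in> C l) = l"
    using assms unfolding is_kclustering_def by (intro some_equality) blast+
  then show ?thesis unfolding ref_center_def by simp
qed

lemma cost_opt_eqI:
  assumes "is_kclustering X k C" "kmeans_cost k C = v"
    and "\<And>C'. is_kclustering X k C' \<Longrightarrow> v \<le> kmeans_cost k C'"
  shows "cost_opt X k = v"
  unfolding cost_opt_def by (rule cInf_eq_minimum) (use assms in auto)

lemma covering_refinement_eq:
  assumes "finite \<P>" "card \<P> \<le> card \<G>" "\<Union>\<P> = \<Union>\<G>"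
    and "{} \<notin> \<G>" "pairwise disjnt \<G>" "\<forall>B\<in>\<P>. \<exists>G\<in>\<G>. B \<subseteq> G"
  shows "\<P> = \<G>"
proof -
  have unique_group: "G = G'" if "G \<in> \<G>" "G' \<in> \<G>" "x \<in> G" "x \<in> G'" for G G' x
    using assms(5) that unfolding pairwise_def disjnt_def by blast
  have "\<forall>G\<in>\<G>. \<exists>B. B \<in> \<P> \<and> B \<noteq> {} \<and> B \<subseteq> G"
  proof
    fix G assume G: "G \<in> \<G>"
    then obtain x where "x \<in> G" using assms(4) by (metis ex_in_conv)
    then obtain B where "B \<in> \<P>" "x \<in> B" using G assms(3) by blast
    moreover obtain G' where "G' \<in> \<G>" "B \<subseteq> G'" using \<open>B \<in> \<P>\<close> assms(6) by blast
    ultimately show "\<exists>B. B \<in> \<P> \<and> B \<noteq> {} \<and> B \<subseteq> G"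
      using unique_group[OF G _ \<open>x \<in> G\<close>] by blast
  qed
  then have "\<exists>\<phi>. \<forall>G\<in>\<G>. \<phi> G \<in> \<P> \<and> \<phi> G \<noteq> {} \<and> \<phi> G \<subseteq> G"
    by (rule bchoice)
  then obtain \<phi> where \<phi>: "\<And>G. G \<in> \<G> \<Longrightarrow> \<phi> G \<in> \<P> \<and> \<phi> G \<noteq> {} \<and> \<phi> G \<subseteq> G"
    by blast
  have inj: "inj_on \<phi> \<G>"
  proof (rule inj_onI)
    fix G G' assume G: "G \<in> \<G>" "G' \<in> \<G>" "\<phi> G = \<phi> G'"
    then obtain x where "x \<in> \<phi> G" using \<phi> by (metis ex_in_conv)
    then show "G = G'" using \<phi> G by (intro unique_group[of G G' x]) auto
  qed
  have sub: "\<phi> ` \<G> \<subseteq> \<P>" using \<phi> by blast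
  have "card (\<phi> ` \<G>) = card \<P>"
    using card_inj_on_le[OF inj sub assms(1)] assms(2) card_image[OF inj] by simp
  then have image: "\<phi> ` \<G> = \<P>"
    using card_subset_eq[OF assms(1) sub] by blast
  have "\<phi> G = G" if G: "G \<in> \<G>" for G
  proof
    show "G \<subseteq> \<phi> G"
    proof
      fix x assume "x \<in> G"
      then have "x \<in> \<Union>(\<phi> ` \<G>)" using G assms(3) image by blast
      then obtain G' where "G' \<in> \<G>" "x \<in> \<phi> G'" by blast
      moreover have "G' = G" using \<phi> calculation \<open>x \<in> G\<close> G unique_group by blast
      ultimately show "x \<in> \<phi> G" by simp
    qed
    show "\<phi> G \<subseteq> G" using \<phi> G by blast
  qed
  then show ?thesis using image by simp
qed

section \<open>IMM on clusterings ordered like their centres\<close>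

definition ordered_clustering :: "(real \<Rightarrow> real) \<Rightarrow> real set \<Rightarrow> real set \<Rightarrow> bool" where
  "ordered_clustering c U M \<longleftrightarrow>
     (\<forall>x\<in>U. c x \<in> M) \<and>
     (\<forall>x\<in>U. \<forall>y\<in>U. c x < c y \<longrightarrow> x < y) \<and>
     (\<forall>x\<in>U. \<forall>\<mu>\<in>M. (c x < \<mu> \<longrightarrow> x < \<mu>) \<and> (\<mu> < c x \<longrightarrow> \<mu> < x))"

lemma ordered_clusteringI_near_centers:
  assumes "\<And>x. x \<in> U \<Longrightarrow> c x \<in> M \<and> \<bar>x - c x\<bar> < \<delta>"
    and "\<And>\<mu> \<nu>. \<mu> \<in> M \<Longrightarrow> \<nu> \<in> M \<Longrightarrow> \<mu> \<noteq> \<nu> \<Longrightarrow> 2 * \<delta> \<le> \<bar>\<mu> - \<nu>\<bar>"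
  shows "ordered_clustering c U M"
  unfolding ordered_clustering_def
proof (intro conjI ballI impI)
  fix x assume x: "x \<in> U"
  then show "c x \<in> M" using assms(1) by blast
  fix \<mu> assume "\<mu> \<in> M"
  then have far: "2 * \<delta> \<le> \<bar>c x - \<mu>\<bar>" if "c x \<noteq> \<mu>"
    using assms x that by blast
  show "x < \<mu>" if "c x < \<mu>" using far that assms(1)[OF x] by auto
  show "\<mu> < x" if "\<mu> < c x" using far that assms(1)[OF x] by auto
next
  fix x y assume xy: "x \<in> U" "y \<in> U" "c x < c y"
  then have "2 * \<delta> \<le> c y - c x" using assms(1)[OF xy(1)] assms(1)[OF xy(2)] assms(2) by force
  then show "x < y" using assms(1)[OF xy(1)] assms(1)[OF xy(2)] by (simp add: abs_less_iff)
qed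

lemma mistakes_eq_0_iff:
  assumes "finite U"
  shows "mistakes c U M \<theta> = 0 \<longleftrightarrow> (\<forall>x\<in>U. c x \<in> M \<longrightarrow> (x \<le> \<theta> \<longleftrightarrow> c x \<le> \<theta>))"
  using assms unfolding mistakes_def by auto

lemma ordered_clustering_mistake_free_cut:
  assumes "finite U" "ordered_clustering c U M" "\<mu> \<in> M" "\<nu> \<in> M" "\<mu> < \<nu>"
  obtains \<theta> where "splits_centers M \<theta>" "mistakes c U M \<theta> = 0"
proof -
  define \<theta> where "\<theta> = Max (insert \<mu> {x\<in>U. c x \<le> \<mu>})"
  have fin: "finite (insert \<mu> {x\<in>U. c x \<le> \<mu>})" using assms(1) by simp
  have ge: "z \<le> \<theta>" if "z = \<mu> \<or> z \<in> U \<and> c z \<le> \<mu>" for z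
    unfolding \<theta>_def using fin that by (intro Max_ge) auto
  have \<theta>_cases: "\<theta> = \<mu> \<or> (\<theta> \<in> U \<and> c \<theta> \<le> \<mu>)"
    unfolding \<theta>_def using Max_in[OF fin] by blast
  have lt: "\<theta> < z" if "z \<in> U \<and> \<mu> < c z \<or> z \<in> M \<and> \<mu> < z" for z
    using \<theta>_cases
  proof
    assume "\<theta> = \<mu>"
    then show ?thesis using that assms(2,3) unfolding ordered_clustering_def by auto
  next
    assume "\<theta> \<in> U \<and> c \<theta> \<le> \<mu>"
    then show ?thesis using that assms(2) unfolding ordered_clustering_def by force
  qed
  have "splits_centers M \<theta>"
    unfolding splits_centers_def using assms(3-5) ge lt by blast
  moreover have "mistakes c U M \<theta> = 0"
    unfolding mistakes_eq_0_iff[OF assms(1)]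
    using ge lt by (metis linorder_not_le order_trans)
  ultimately show thesis by (rule that)
qed

lemma ordered_clustering_cut:
  assumes "ordered_clustering c U M" "finite U" "mistakes c U M \<theta> = 0"
  shows "ordered_clustering c {x\<in>U. x \<le> \<theta>} {\<mu>\<in>M. \<mu> \<le> \<theta>}"
    and "ordered_clustering c {x\<in>U. \<theta> < x} {\<mu>\<in>M. \<theta> < \<mu>}"
  using assms unfolding ordered_clustering_def mistakes_eq_0_iff[OF assms(2)] by auto

lemma imm_cut_mistake_free:
  assumes "finite U" "ordered_clustering c U M" "splits_centers M \<theta>"
    and "\<forall>\<theta>'. splits_centers M \<theta>' \<longrightarrow> mistakes c U M \<theta> \<le> mistakes c U M \<theta>'"
  shows "mistakes c U M \<theta> = 0"
proof -
  obtain \<mu> \<nu> where centers: "\<mu> \<in> M" "\<nu> \<in> M" "\<mu> \<le> \<theta>" "\<theta> < \<nu>"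
    using assms(3) unfolding splits_centers_def by blast
  have "\<mu> < \<nu>" using centers(3,4) by linarith
  then obtain \<theta>\<^sub>0 where "splits_centers M \<theta>\<^sub>0" "mistakes c U M \<theta>\<^sub>0 = 0"
    using ordered_clustering_mistake_free_cut[OF assms(1,2) centers(1,2)] by blast
  then have "mistakes c U M \<theta> \<le> 0" using assms(4) by metis
  then show ?thesis by simp
qed

theorem imm_partition_cost:
  assumes "imm c U M T" "finite U" "finite M" "ordered_clustering c U M"
  shows "partition_cost (tleaves T U) = (\<Sum>\<mu>\<in>M. cluster_cost {x\<in>U. c x = \<mu>})"
  using assms
proof (induction rule: imm.induct)
  case (imm_leaf M c U)
  then obtain \<mu> where "M = {\<mu>}" by (auto simp: card_1_singleton_iff)
  moreover have "{x\<in>U. c x = \<mu>} = U"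
    using imm_leaf.prems(3) \<open>M = {\<mu>}\<close> unfolding ordered_clustering_def by auto
  ultimately show ?case by (simp add: partition_cost_def)
next
  case (imm_node M \<theta> c U Tl Tr)
  have no_mistakes: "mistakes c U M \<theta> = 0"
    using imm_cut_mistake_free imm_node.hyps(2,3) imm_node.prems by blast
  note children = ordered_clustering_cut[OF imm_node.prems(3,1) no_mistakes]
  have "{x\<in>{x\<in>U. x \<le> \<theta>}. c x = \<mu>} = {x\<in>U. c x = \<mu>}" if "\<mu> \<in> M" "\<mu> \<le> \<theta>" for \<mu>
    using no_mistakes that imm_node.prems(1) by (auto simp: mistakes_eq_0_iff)
  moreover have "{x\<in>{x\<in>U. \<theta> < x}. c x = \<mu>} = {x\<in>U. c x = \<mu>}" if "\<mu> \<in> M" "\<theta> < \<mu>" for \<mu>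
    using no_mistakes that imm_node.prems(1) by (auto simp: mistakes_eq_0_iff)
  ultimately have "partition_cost (tleaves (TNode \<theta> Tl Tr) U)
      = (\<Sum>\<mu>\<in>{\<mu>\<in>M. \<mu> \<le> \<theta>}. cluster_cost {x\<in>U. c x = \<mu>})
      + (\<Sum>\<mu>\<in>{\<mu>\<in>M. \<theta> < \<mu>}. cluster_cost {x\<in>U. c x = \<mu>})"
    using imm_node.IH children imm_node.prems(1,2) by (simp add: partition_cost_append)
  also have "\<dots> = (\<Sum>\<mu>\<in>{\<mu>\<in>M. \<mu> \<le> \<theta>} \<union> {\<mu>\<in>M. \<theta> < \<mu>}. cluster_cost {x\<in>U. c x = \<mu>})"
    using imm_node.prems(2) by (intro sum.union_disjoint[symmetric]) auto
  also have "{\<mu>\<in>M. \<mu> \<le> \<theta>} \<union> {\<mu>\<in>M. \<theta> < \<mu>} = M" by auto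
  finally show ?case .
qed

theorem imm_exists:
  assumes "finite U" "finite M" "M \<noteq> {}" "ordered_clustering c U M"
  shows "\<exists>T. imm c U M T"
  using assms
proof (induction "card M" arbitrary: U M rule: less_induct)
  case less
  show ?case
  proof (cases "card M = 1")
    case True
    then show ?thesis using imm_leaf by blast
  next
    case False
    moreover have "0 < card M" using less.prems(2,3) by (simp add: card_gt_0_iff)
    ultimately have "\<not> card M \<le> Suc 0" by linarith
    then obtain \<mu> \<nu> where "\<mu> \<in> M" "\<nu> \<in> M" "\<mu> \<noteq> \<nu>"
      using card_le_Suc0_iff_eq[OF less.prems(2)] by blast
    then obtain \<mu> \<nu> where "\<mu> \<in> M" "\<nu> \<in> M" "\<mu> < \<nu>"
      by (metis linorder_neq_iff)
    then obtain \<theta> where split: "splits_centers M \<theta>" and no_mistakes: "mistakes c U M \<theta> = 0"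
      using ordered_clustering_mistake_free_cut[OF less.prems(1,4)] by blast
    let ?M_left = "{\<mu>\<in>M. \<mu> \<le> \<theta>}" and ?M_right = "{\<mu>\<in>M. \<theta> < \<mu>}"
    obtain a b where "a \<in> M" "a \<le> \<theta>" "b \<in> M" "\<theta> < b"
      using split unfolding splits_centers_def by blast
    then have "?M_left \<noteq> {}" "?M_right \<noteq> {}" "?M_left \<subset> M" "?M_right \<subset> M" by (blast dest: leD)+
    moreover have "card ?M_left < card M" "card ?M_right < card M"
      using calculation(3,4) less.prems(2) by (simp_all add: psubset_card_mono)
    moreover note children = ordered_clustering_cut[OF less.prems(4,1) no_mistakes]
    ultimately have "\<exists>Tl. imm c {x\<in>U. x \<le> \<theta>} ?M_left Tl" "\<exists>Tr. imm c {x\<in>U. \<theta> < x} ?M_right Tr"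
      using less.prems(1,2) by (intro less.hyps; simp)+
    then obtain Tl Tr where
      "imm c {x\<in>U. x \<le> \<theta>} ?M_left Tl" "imm c {x\<in>U. \<theta> < x} ?M_right Tr" by blast
    then have "imm c U M (TNode \<theta> Tl Tr)"
      using no_mistakes by (intro imm_node[OF False split]) simp_all
    then show ?thesis ..
  qed
qed

section \<open>ExKMC gains against fixed centres\<close>

definition best_center_cost :: "real set \<Rightarrow> real set \<Rightarrow> real" where
  "best_center_cost P U = Min (sqdist_sum U ` P)"

definition cut_cost :: "real set \<Rightarrow> real set \<Rightarrow> real \<Rightarrow> real" where
  "cut_cost P U \<theta> = best_center_cost P {x\<in>U. x \<le> \<theta>} + best_center_cost P {x\<in>U. \<theta> < x}"

lemma Min_add_pairs:
  fixes f g :: "'a \<Rightarrow> real"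
  assumes "finite P" "P \<noteq> {}"
  shows "Min {f u + g v | u v. u \<in> P \<and> v \<in> P} = Min (f ` P) + Min (g ` P)"
proof (rule Min_eqI)
  have "{f u + g v | u v. u \<in> P \<and> v \<in> P} = (\<lambda>(u, v). f u + g v) ` (P \<times> P)" by auto
  then show "finite {f u + g v | u v. u \<in> P \<and> v \<in> P}" using assms(1) by simp
  show "Min (f ` P) + Min (g ` P) \<le> y" if y: "y \<in> {f u + g v | u v. u \<in> P \<and> v \<in> P}" for y
  proof -
    obtain u v where "u \<in> P" "v \<in> P" "y = f u + g v" using y by blast
    moreover have "Min (f ` P) \<le> f u" "Min (g ` P) \<le> g v" using calculation assms(1) by simp_all
    ultimately show ?thesis by simp
  qed
  have "Min (f ` P) \<in> f ` P" "Min (g ` P) \<in> g ` P" using assms by simp_all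
  then obtain u v where "u \<in> P" "f u = Min (f ` P)" "v \<in> P" "g v = Min (g ` P)"
    by (metis imageE)
  then show "Min (f ` P) + Min (g ` P) \<in> {f u + g v | u v. u \<in> P \<and> v \<in> P}" by force
qed

lemma exkmc_gain_eq:
  assumes "0 < k"
  shows "exkmc_gain k cen U \<theta>
    = best_center_cost (cen ` {..<k}) U - cut_cost (cen ` {..<k}) U \<theta>"
proof -
  let ?P = "cen ` {..<k}"
  have "{sqdist_sum {x\<in>U. x \<le> \<theta>} (cen j) + sqdist_sum {x\<in>U. \<theta> < x} (cen l) | j l. j < k \<and> l < k}
      = {sqdist_sum {x\<in>U. x \<le> \<theta>} u + sqdist_sum {x\<in>U. \<theta> < x} v | u v. u \<in> ?P \<and> v \<in> ?P}"
    by blast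
  moreover have "{sqdist_sum U (cen j) | j. j < k} = sqdist_sum U ` ?P" by blast
  moreover have "finite ?P" "?P \<noteq> {}" using assms by auto
  ultimately show ?thesis
    unfolding exkmc_gain_def exkmc_cost_def cut_cost_def best_center_cost_def
    by (simp add: Min_add_pairs)
qed

lemma best_center_cost_le: "finite P \<Longrightarrow> c \<in> P \<Longrightarrow> best_center_cost P U \<le> sqdist_sum U c"
  unfolding best_center_cost_def by simp

lemma best_center_cost_nonneg: "finite P \<Longrightarrow> P \<noteq> {} \<Longrightarrow> 0 \<le> best_center_cost P U"
  unfolding best_center_cost_def sqdist_sum_def by (simp add: sum_nonneg)

lemma best_center_cost_mono:
  assumes "finite P" "P \<noteq> {}" "finite U" "V \<subseteq> U"
  shows "best_center_cost P V \<le> best_center_cost P U"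
proof -
  have "best_center_cost P U \<in> sqdist_sum U ` P"
    unfolding best_center_cost_def using assms(1,2) by simp
  then obtain c where "c \<in> P" "best_center_cost P U = sqdist_sum U c" by blast
  moreover have "sqdist_sum V c \<le> sqdist_sum U c"
    unfolding sqdist_sum_def using assms(3,4) by (intro sum_mono2) auto
  ultimately show ?thesis using best_center_cost_le[OF assms(1), of c V] by linarith
qed

lemma sq_le_best_center_cost:
  assumes "finite P" "P \<noteq> {}" "finite S" "0 \<le> d" "\<And>c. c \<in> P \<Longrightarrow> \<exists>x\<in>S. d \<le> \<bar>x - c\<bar>"
  shows "d^2 \<le> best_center_cost P S"
proof -
  have "best_center_cost P S \<in> sqdist_sum S ` P"
    unfolding best_center_cost_def using assms(1,2) by simp
  then obtain c where "c \<in> P" "best_center_cost P S = sqdist_sum S c" by blast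
  moreover obtain x where "x \<in> S" "d \<le> \<bar>x - c\<bar>" using assms(5) calculation(1) by blast
  moreover have "d^2 \<le> (x - c)^2"
    using calculation(4) assms(4) by (metis abs_le_square_iff abs_of_nonneg)
  moreover have "(x - c)^2 \<le> sqdist_sum S c"
    unfolding sqdist_sum_def using calculation(3) assms(3) by (intro member_le_sum) auto
  ultimately show ?thesis by linarith
qed

lemma best_center_cost_le_cut_cost:
  assumes "finite P" "P \<noteq> {}" "finite U" "V \<subseteq> {x\<in>U. x \<le> \<theta>} \<or> V \<subseteq> {x\<in>U. \<theta> < x}"
  shows "best_center_cost P V \<le> cut_cost P U \<theta>"
proof -
  have "finite {x\<in>U. x \<le> \<theta>}" "finite {x\<in>U. \<theta> < x}" using assms(3) by simp_all
  then have "best_center_cost P V \<le> best_center_cost P {x\<in>U. x \<le> \<theta>}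
      \<or> best_center_cost P V \<le> best_center_cost P {x\<in>U. \<theta> < x}"
    using assms(4) best_center_cost_mono[OF assms(1,2)] by blast
  then show ?thesis
    using best_center_cost_nonneg[OF assms(1,2)] unfolding cut_cost_def by (smt (verit))
qed

section \<open>The three-twin data set\<close>

definition twin :: "real \<Rightarrow> real set" where
  "twin a = {a - 1, a + 1}"

lemma mean_twin: "mean (twin a) = a"
  by (simp add: mean_def twin_def)

lemma sqdist_sum_twin: "sqdist_sum (twin a) c = 2 + 2 * (a - c)^2"
  by (simp add: sqdist_sum_def twin_def power2_eq_square algebra_simps)

lemma cluster_cost_twin: "cluster_cost (twin a) = 2"
  by (simp add: cluster_cost_eq_sqdist_sum_mean mean_twin sqdist_sum_twin)

lemma best_center_cost_twin:
  assumes "finite P" "a \<in> P"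
  shows "best_center_cost P (twin a) = 2"
  unfolding best_center_cost_def
proof (rule Min_eqI)
  show "2 \<in> sqdist_sum (twin a) ` P" using assms(2) by (force simp: sqdist_sum_twin)
qed (use assms(1) in \<open>auto simp: sqdist_sum_twin\<close>)

lemma nleaves_repl: "i < nleaves T \<Longrightarrow> nleaves (repl T i \<theta>) = Suc (nleaves T)"
  by (induction T arbitrary: i) auto

lemma exkmc_step_nleaves: "exkmc_step k cen X T T' \<Longrightarrow> nleaves T' = Suc (nleaves T)"
  unfolding exkmc_step_def using nleaves_repl by blast

lemma exkmc_steps_nleaves:
  "(exkmc_step k cen X ^^ n) T T' \<Longrightarrow> nleaves T' = nleaves T + n"
proof (induction n arbitrary: T')
  case (Suc n)
  then obtain T'' where "(exkmc_step k cen X ^^ n) T T''" "exkmc_step k cen X T'' T'" by auto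
  then show ?case using Suc.IH exkmc_step_nleaves by simp
qed simp

definition triad :: "real \<Rightarrow> real set" where
  "triad D = {-D, 0, D}"

definition triad_data :: "real \<Rightarrow> real set" where
  "triad_data D = {-D - 1, -D + 1, -1, 1, D - 1, D + 1}"

definition triad_clustering :: "real \<Rightarrow> nat \<Rightarrow> real set" where
  "triad_clustering D l = twin ([-D, 0, D] ! l)"

definition triad_left :: "real \<Rightarrow> real set" where
  "triad_left D = {-D - 1, -D + 1, -1}"

definition triad_right :: "real \<Rightarrow> real set" where
  "triad_right D = {1, D - 1, D + 1}"

lemma finite_triad: "finite (triad D)"
  and triad_nonempty: "triad D \<noteq> {}"
  and finite_triad_data: "finite (triad_data D)"
  by (simp_all add: triad_def triad_data_def)

context
  fixes D :: real
  assumes D_ge: "10 \<le> D"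
begin

lemma triad_data_eq_Union_twin: "triad_data D = \<Union>(twin ` triad D)"
  by (auto simp: triad_data_def triad_def twin_def)

lemma card_triad: "card (triad D) = 3"
  using D_ge by (simp add: triad_def)

lemma twin_far_apart:
  assumes "a \<in> triad D" "b \<in> triad D" "a \<noteq> b" "x \<in> twin a" "y \<in> twin b"
  shows "8 \<le> \<bar>x - y\<bar>"
  using assms D_ge by (auto simp: triad_def twin_def)

lemma pairwise_disjnt_twin: "pairwise disjnt (twin ` triad D)"
  unfolding pairwise_def disjnt_def using twin_far_apart by fastforce

lemma card_twin_triad: "card (twin ` triad D) = 3"
proof -
  have "inj_on twin (triad D)" by (metis inj_onI mean_twin)
  then show ?thesis by (simp add: card_image card_triad)
qed

lemma sum_cluster_cost_twin_triad: "(\<Sum>G\<in>twin ` triad D. cluster_cost G) = 6"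
proof -
  have "(\<Sum>G\<in>twin ` triad D. cluster_cost G) = (\<Sum>G\<in>twin ` triad D. 2)"
    by (rule sum.cong) (auto simp: cluster_cost_twin)
  then show ?thesis by (simp add: card_twin_triad)
qed

lemma subset_twin_or_cluster_cost_ge:
  assumes "S \<subseteq> triad_data D"
  shows "(\<exists>a\<in>triad D. S \<subseteq> twin a) \<or> 32 \<le> cluster_cost S"
proof (cases "\<exists>a\<in>triad D. S \<subseteq> twin a")
  case not_in_twin: False
  then obtain x where "x \<in> S" unfolding triad_def by blast
  then obtain a where a: "a \<in> triad D" "x \<in> twin a"
    using assms triad_data_eq_Union_twin by blast
  then obtain y where "y \<in> S" "y \<notin> twin a" using not_in_twin by blast
  then obtain b where b: "b \<in> triad D" "y \<in> twin b"
    using assms triad_data_eq_Union_twin by blast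
  then have "8 \<le> \<bar>x - y\<bar>" using twin_far_apart a \<open>y \<notin> twin a\<close> by blast
  then have "8^2 \<le> (x - y)^2" by (metis abs_le_square_iff abs_of_nonneg zero_le_numeral)
  moreover have "(x - y)^2 / 2 \<le> cluster_cost S"
    using cluster_cost_ge_half_sq_dist finite_subset[OF assms finite_triad_data] \<open>x \<in> S\<close> \<open>y \<in> S\<close>
    by blast
  ultimately show ?thesis by simp
qed simp

lemma kmeans_cost_triad_data_cases:
  assumes "(\<Union>l<3. B l) = triad_data D"
  shows "B ` {..<3} = twin ` triad D \<and> kmeans_cost 3 B = 6 \<or> 32 \<le> kmeans_cost 3 B"
proof (cases "\<forall>l<3. \<exists>a\<in>triad D. B l \<subseteq> twin a")
  case True
  have "card (B ` {..<3}) \<le> card (twin ` triad D)"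
    using card_image_le[of "{..<3::nat}" B] by (simp add: card_twin_triad)
  moreover have "{} \<notin> twin ` triad D" by (auto simp: twin_def)
  ultimately have blocks: "B ` {..<3} = twin ` triad D"
    using True assms pairwise_disjnt_twin triad_data_eq_Union_twin
    by (intro covering_refinement_eq) auto
  then have "inj_on B {..<3}"
    by (intro eq_card_imp_inj_on) (simp_all add: card_twin_triad)
  then have "kmeans_cost 3 B = (\<Sum>G\<in>B ` {..<3}. cluster_cost G)"
    unfolding kmeans_cost_def by (simp add: sum.reindex)
  then show ?thesis using blocks sum_cluster_cost_twin_triad by simp
next
  case False
  then obtain l where "l < 3" "\<not> (\<exists>a\<in>triad D. B l \<subseteq> twin a)" by blast
  moreover have "B l \<subseteq> triad_data D" using assms \<open>l < 3\<close> by blast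
  ultimately have "32 \<le> cluster_cost (B l)" using subset_twin_or_cluster_cost_ge by blast
  also have "\<dots> \<le> kmeans_cost 3 B"
    unfolding kmeans_cost_def using \<open>l < 3\<close>
    by (intro member_le_sum) (auto simp: cluster_cost_nonneg)
  finally show ?thesis ..
qed

lemma is_kclustering_triad_clustering: "is_kclustering (triad_data D) 3 (triad_clustering D)"
  and kmeans_cost_triad_clustering: "kmeans_cost 3 (triad_clustering D) = 6"
proof -
  have idx: "{..<3::nat} = {0, 1, 2}" by auto
  show "is_kclustering (triad_data D) 3 (triad_clustering D)"
    using D_ge unfolding is_kclustering_def triad_clustering_def idx
    by (auto simp: triad_data_def twin_def numeral_3_eq_3 less_Suc_eq)
  show "kmeans_cost 3 (triad_clustering D) = 6"
    unfolding kmeans_cost_def triad_clustering_def idx by (simp add: cluster_cost_twin)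
qed

lemma cost_opt_triad_data: "cost_opt (triad_data D) 3 = 6"
proof (rule cost_opt_eqI[OF is_kclustering_triad_clustering kmeans_cost_triad_clustering])
  fix C assume "is_kclustering (triad_data D) 3 C"
  then show "6 \<le> kmeans_cost 3 C"
    using kmeans_cost_triad_data_cases[of C] unfolding is_kclustering_def by fastforce
qed

lemma optimal_clustering_triad_clustering: "optimal_clustering (triad_data D) 3 (triad_clustering D)"
  unfolding optimal_clustering_def cost_opt_triad_data
  using is_kclustering_triad_clustering kmeans_cost_triad_clustering by simp

lemma optimal_clustering_triad_data_blocks:
  assumes "optimal_clustering (triad_data D) 3 C"
  shows "C ` {..<3} = twin ` triad D"
  using assms kmeans_cost_triad_data_cases[of C]
  unfolding optimal_clustering_def cost_opt_triad_data is_kclustering_def by auto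

lemma price_expl_triad_data: "price_expl (triad_data D) 3 = 1"
  unfolding price_expl_def
proof (rule cInf_eq_minimum)
  define T where "T = INode (-D - 1) (-D + 1) ILeaf (INode (-1) 1 ILeaf ILeaf)"
  have "{x\<in>triad_data D. -D - 1 \<le> x \<and> x \<le> -D + 1} = twin (-D)"
    "{x\<in>triad_data D. \<not> (-D - 1 \<le> x \<and> x \<le> -D + 1)} = twin 0 \<union> twin D"
    "{x\<in>twin 0 \<union> twin D. -1 \<le> x \<and> x \<le> 1} = twin 0"
    "{x\<in>twin 0 \<union> twin D. \<not> (-1 \<le> x \<and> x \<le> 1)} = twin D"
    using D_ge by (auto simp: triad_data_def twin_def)
  then have "ileaves T (triad_data D) = [twin (-D), twin 0, twin D]"
    by (simp add: T_def)
  then have "price_itree T (triad_data D) 3 = 1"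
    by (simp add: price_itree_def cost_opt_triad_data partition_cost_def cluster_cost_twin)
  moreover have "interpretable T \<and> length (ileaves T (triad_data D)) = 3"
    using \<open>ileaves T (triad_data D) = _\<close> by (simp add: T_def)
  ultimately show "1 \<in> {price_itree T (triad_data D) 3 | T. interpretable T \<and> length (ileaves T (triad_data D)) = 3}"
    by (metis (mono_tags, lifting) mem_Collect_eq)
next
  fix p assume "p \<in> {price_itree T (triad_data D) 3 | T. interpretable T \<and> length (ileaves T (triad_data D)) = 3}"
  then obtain T where p: "p = price_itree T (triad_data D) 3" and len: "length (ileaves T (triad_data D)) = 3"
    by blast
  have "(\<Union>l<3. ileaves T (triad_data D) ! l) = triad_data D"
    using Union_lessThan_nth[of "ileaves T (triad_data D)"] len by (simp add: Union_set_ileaves)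
  then have "6 \<le> kmeans_cost 3 ((!) (ileaves T (triad_data D)))"
    using kmeans_cost_triad_data_cases[OF \<open>(\<Union>l<3. _) = _\<close>] by auto
  then have "6 \<le> partition_cost (ileaves T (triad_data D))"
    by (simp add: partition_cost_eq_kmeans_cost len)
  then show "1 \<le> p" unfolding p price_itree_def cost_opt_triad_data by simp
qed

lemma optimal_clustering_ref_center:
  assumes "optimal_clustering (triad_data D) 3 C" "a \<in> triad D" "x \<in> twin a"
  shows "ref_center 3 C x = a"
proof -
  have "twin a \<in> C ` {..<3}"
    using optimal_clustering_triad_data_blocks[OF assms(1)] assms(2) by simp
  then obtain l where "l < 3" "C l = twin a" by auto
  then show ?thesis
    using ref_center_eq_mean[of "triad_data D" 3 C l x] assms(1,3)
    by (simp add: optimal_clustering_def mean_twin)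
qed

lemma optimal_clustering_means:
  assumes "optimal_clustering (triad_data D) 3 C"
  shows "(\<lambda>l. mean (C l)) ` {..<3} = triad D"
proof -
  have "mean ` C ` {..<3} = mean ` twin ` triad D"
    using optimal_clustering_triad_data_blocks[OF assms] by simp
  then show ?thesis by (simp add: image_image mean_twin)
qed

lemma optimal_clustering_ref_center_eq_iff:
  assumes "optimal_clustering (triad_data D) 3 C" "a \<in> triad D" "x \<in> triad_data D"
  shows "ref_center 3 C x = a \<longleftrightarrow> x \<in> twin a"
proof -
  obtain b where "b \<in> triad D" "x \<in> twin b"
    using assms(3) triad_data_eq_Union_twin by blast
  then show ?thesis
    using optimal_clustering_ref_center[OF assms(1)] twin_far_apart[OF _ assms(2)] by force
qed

lemma optimal_clustering_ordered:
  assumes "optimal_clustering (triad_data D) 3 C"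
  shows "ordered_clustering (ref_center 3 C) (triad_data D) (triad D)"
proof (rule ordered_clusteringI_near_centers[where \<delta> = 2])
  fix x assume "x \<in> triad_data D"
  then obtain a where "a \<in> triad D" "x \<in> twin a"
    using triad_data_eq_Union_twin by blast
  then show "ref_center 3 C x \<in> triad D \<and> \<bar>x - ref_center 3 C x\<bar> < 2"
    using optimal_clustering_ref_center[OF assms] by (auto simp: twin_def)
next
  fix \<mu> \<nu> assume "\<mu> \<in> triad D" "\<nu> \<in> triad D" "\<mu> \<noteq> \<nu>"
  then show "2 * 2 \<le> \<bar>\<mu> - \<nu>\<bar>" using D_ge by (auto simp: triad_def)
qed

lemma imm_tree_triad_data:
  assumes "optimal_clustering (triad_data D) 3 C"
  shows "\<exists>T. imm_tree (triad_data D) 3 C T"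
    and "imm_tree (triad_data D) 3 C T \<Longrightarrow> price_ttree T (triad_data D) 3 = 1"
proof -
  note imm_tree_iff = imm_tree_def optimal_clustering_means[OF assms]
  show "\<exists>T. imm_tree (triad_data D) 3 C T"
    unfolding imm_tree_iff using optimal_clustering_ordered[OF assms] finite_triad_data
    by (intro imm_exists) (auto simp: triad_def)
  assume "imm_tree (triad_data D) 3 C T"
  then have "partition_cost (tleaves T (triad_data D))
      = (\<Sum>a\<in>triad D. cluster_cost {x\<in>triad_data D. ref_center 3 C x = a})"
    unfolding imm_tree_iff using optimal_clustering_ordered[OF assms] finite_triad_data
    by (intro imm_partition_cost) (auto simp: triad_def)
  also have "\<dots> = (\<Sum>a\<in>triad D. cluster_cost (twin a))"
  proof (rule sum.cong)
    fix a assume "a \<in> triad D"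
    moreover have "twin a \<subseteq> triad_data D" using calculation triad_data_eq_Union_twin by blast
    ultimately have "{x\<in>triad_data D. ref_center 3 C x = a} = twin a"
      using optimal_clustering_ref_center_eq_iff[OF assms] by blast
    then show "cluster_cost {x\<in>triad_data D. ref_center 3 C x = a} = cluster_cost (twin a)" by simp
  qed simp
  also have "\<dots> = 6" by (simp add: cluster_cost_twin card_triad)
  finally show "price_ttree T (triad_data D) 3 = 1"
    by (simp add: price_ttree_def cost_opt_triad_data)
qed

lemma twice_lt_sq: "2 * D < D^2"
proof -
  have "10 * D \<le> D * D" using D_ge by (intro mult_right_mono) auto
  then show ?thesis using D_ge by (simp add: power2_eq_square)
qed

lemma le_best_center_cost_triad_iff:
  "v \<le> best_center_cost (triad D) U \<longleftrightarrow>
     v \<le> sqdist_sum U (-D) \<and> v \<le> sqdist_sum U 0 \<and> v \<le> sqdist_sum U D"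
  by (simp add: best_center_cost_def triad_def)

lemma best_center_cost_triad_le: "c \<in> triad D \<Longrightarrow> best_center_cost (triad D) U \<le> sqdist_sum U c"
  by (simp add: best_center_cost_le triad_def)

lemma best_center_cost_triad_left: "best_center_cost (triad D) (triad_left D) = D^2 - 2 * D + 3"
proof (rule antisym)
  show "best_center_cost (triad D) (triad_left D) \<le> D^2 - 2 * D + 3"
    using best_center_cost_triad_le[of "-D" "triad_left D"] D_ge
    by (simp add: triad_def triad_left_def sqdist_sum_def power2_eq_square algebra_simps)
  show "D^2 - 2 * D + 3 \<le> best_center_cost (triad D) (triad_left D)"
    unfolding le_best_center_cost_triad_iff using D_ge
    by (simp add: triad_left_def sqdist_sum_def power2_eq_square algebra_simps)
qed

lemma best_center_cost_triad_right: "best_center_cost (triad D) (triad_right D) = D^2 - 2 * D + 3"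
proof (rule antisym)
  show "best_center_cost (triad D) (triad_right D) \<le> D^2 - 2 * D + 3"
    using best_center_cost_triad_le[of D "triad_right D"] D_ge
    by (simp add: triad_def triad_right_def sqdist_sum_def power2_eq_square algebra_simps)
  show "D^2 - 2 * D + 3 \<le> best_center_cost (triad D) (triad_right D)"
    unfolding le_best_center_cost_triad_iff using D_ge
    by (simp add: triad_right_def sqdist_sum_def power2_eq_square algebra_simps)
qed

lemma best_center_cost_triad_unit:
  assumes "x \<in> {-1, 1}"
  shows "best_center_cost (triad D) {x} = 1"
proof (rule antisym)
  show "best_center_cost (triad D) {x} \<le> 1"
    using best_center_cost_triad_le[of 0 "{x}"] assms by (auto simp: triad_def sqdist_sum_def)
  have "1^2 \<le> best_center_cost (triad D) {x}"
    using assms D_ge by (intro sq_le_best_center_cost[OF finite_triad triad_nonempty]) (auto simp: triad_def)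
  then show "1 \<le> best_center_cost (triad D) {x}" by simp
qed

lemma triad_data_cut:
  assumes "-1 \<le> \<theta>" "\<theta> < 1"
  shows "{x\<in>triad_data D. x \<le> \<theta>} = triad_left D" "{x\<in>triad_data D. \<theta> < x} = triad_right D"
  using assms D_ge by (auto simp: triad_data_def triad_left_def triad_right_def)

lemma cut_cost_triad_data_eq:
  assumes "-1 \<le> \<theta>" "\<theta> < 1"
  shows "cut_cost (triad D) (triad_data D) \<theta> = 2 * (D^2 - 2 * D + 3)"
  unfolding cut_cost_def triad_data_cut[OF assms]
  by (simp add: best_center_cost_triad_left best_center_cost_triad_right)

lemma cut_cost_triad_data_gt:
  assumes "\<not> (-1 \<le> \<theta> \<and> \<theta> < 1)"
  shows "2 * (D^2 - 2 * D + 3) < cut_cost (triad D) (triad_data D) \<theta>"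
proof -
  have bound: "2 * D^2 + 4 \<le> cut_cost (triad D) (triad_data D) \<theta>"
    if "V \<subseteq> {x\<in>triad_data D. x \<le> \<theta>} \<or> V \<subseteq> {x\<in>triad_data D. \<theta> < x}"
      and "2 * D^2 + 4 \<le> best_center_cost (triad D) V" for V
    using best_center_cost_le_cut_cost[OF finite_triad[of D] triad_nonempty[of D] finite_triad_data that(1)] that(2) by linarith
  consider "\<theta> < -1" | "1 \<le> \<theta>" using assms by linarith
  then have "2 * D^2 + 4 \<le> cut_cost (triad D) (triad_data D) \<theta>"
  proof cases
    case 1
    then have "{-1, 1, D - 1, D + 1} \<subseteq> {x\<in>triad_data D. \<theta> < x}"
      using D_ge by (auto simp: triad_data_def)
    moreover have "2 * D^2 + 4 \<le> best_center_cost (triad D) {-1, 1, D - 1, D + 1}"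
      unfolding le_best_center_cost_triad_iff using D_ge
      by (simp add: sqdist_sum_def power2_eq_square algebra_simps)
    ultimately show ?thesis using bound by blast
  next
    case 2
    then have "{-D - 1, -D + 1, -1, 1} \<subseteq> {x\<in>triad_data D. x \<le> \<theta>}"
      using D_ge by (auto simp: triad_data_def)
    moreover have "2 * D^2 + 4 \<le> best_center_cost (triad D) {-D - 1, -D + 1, -1, 1}"
      unfolding le_best_center_cost_triad_iff using D_ge
      by (simp add: sqdist_sum_def power2_eq_square algebra_simps)
    ultimately show ?thesis using bound by blast
  qed
  then show ?thesis using D_ge by simp
qed

lemma cut_cost_triad_left_eq:
  assumes "-D + 1 \<le> \<theta>" "\<theta> < -1"
  shows "cut_cost (triad D) (triad_left D) \<theta> = 3"
proof -
  have "{x\<in>triad_left D. x \<le> \<theta>} = twin (-D)" "{x\<in>triad_left D. \<theta> < x} = {-1}"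
    using assms D_ge by (auto simp: triad_left_def twin_def)
  then show ?thesis
    unfolding cut_cost_def using finite_triad best_center_cost_triad_unit[of "-1"]
    by (simp add: best_center_cost_twin triad_def)
qed

lemma cut_cost_triad_left_gt:
  assumes "\<not> (-D + 1 \<le> \<theta> \<and> \<theta> < -1)"
  shows "3 < cut_cost (triad D) (triad_left D) \<theta>"
proof -
  have fin: "finite (triad_left D)" by (simp add: triad_left_def)
  consider "\<theta> < -D + 1" | "-1 \<le> \<theta>" using assms by linarith
  then show ?thesis
  proof cases
    case 1
    then have "{-D + 1, -1} \<subseteq> {x\<in>triad_left D. \<theta> < x}"
      using D_ge by (auto simp: triad_left_def)
    moreover have "2^2 \<le> best_center_cost (triad D) {-D + 1, -1}"
      using D_ge by (intro sq_le_best_center_cost[OF finite_triad triad_nonempty]) (auto simp: triad_def)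
    moreover have "best_center_cost (triad D) {-D + 1, -1} \<le> cut_cost (triad D) (triad_left D) \<theta>"
      using calculation(1) by (intro best_center_cost_le_cut_cost[OF finite_triad triad_nonempty fin]) blast
    ultimately show ?thesis by simp
  next
    case 2
    then have "triad_left D \<subseteq> {x\<in>triad_left D. x \<le> \<theta>}"
      using D_ge by (auto simp: triad_left_def)
    then have "best_center_cost (triad D) (triad_left D) \<le> cut_cost (triad D) (triad_left D) \<theta>"
      by (intro best_center_cost_le_cut_cost[OF finite_triad triad_nonempty fin]) blast
    then show ?thesis using best_center_cost_triad_left twice_lt_sq by linarith
  qed
qed

lemma cut_cost_triad_right_eq:
  assumes "1 \<le> \<theta>" "\<theta> < D - 1"
  shows "cut_cost (triad D) (triad_right D) \<theta> = 3"
proof -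
  have "{x\<in>triad_right D. x \<le> \<theta>} = {1}" "{x\<in>triad_right D. \<theta> < x} = twin D"
    using assms D_ge by (auto simp: triad_right_def twin_def)
  then show ?thesis
    unfolding cut_cost_def using finite_triad best_center_cost_triad_unit[of 1]
    by (simp add: best_center_cost_twin triad_def)
qed

lemma cut_cost_triad_right_gt:
  assumes "\<not> (1 \<le> \<theta> \<and> \<theta> < D - 1)"
  shows "3 < cut_cost (triad D) (triad_right D) \<theta>"
proof -
  have fin: "finite (triad_right D)" by (simp add: triad_right_def)
  consider "\<theta> < 1" | "D - 1 \<le> \<theta>" using assms by linarith
  then show ?thesis
  proof cases
    case 1
    then have "triad_right D \<subseteq> {x\<in>triad_right D. \<theta> < x}"
      using D_ge by (auto simp: triad_right_def)
    then have "best_center_cost (triad D) (triad_right D) \<le> cut_cost (triad D) (triad_right D) \<theta>"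
      by (intro best_center_cost_le_cut_cost[OF finite_triad triad_nonempty fin]) blast
    then show ?thesis using best_center_cost_triad_right twice_lt_sq by linarith
  next
    case 2
    then have "{1, D - 1} \<subseteq> {x\<in>triad_right D. x \<le> \<theta>}"
      using D_ge by (auto simp: triad_right_def)
    moreover have "2^2 \<le> best_center_cost (triad D) {1, D - 1}"
      using D_ge by (intro sq_le_best_center_cost[OF finite_triad triad_nonempty]) (auto simp: triad_def)
    moreover have "best_center_cost (triad D) {1, D - 1} \<le> cut_cost (triad D) (triad_right D) \<theta>"
      using calculation(1) by (intro best_center_cost_le_cut_cost[OF finite_triad triad_nonempty fin]) blast
    ultimately show ?thesis by simp
  qed
qed

lemma exkmc_gain_triad:
  assumes "cen ` {..<3} = triad D"
  shows "exkmc_gain 3 cen U \<theta> = best_center_cost (triad D) U - cut_cost (triad D) U \<theta>"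
  using exkmc_gain_eq[of 3 cen U \<theta>] assms by simp

lemma exkmc_first_step_iff:
  assumes "cen ` {..<3} = triad D"
  shows "exkmc_step 3 cen (triad_data D) TLeaf T \<longleftrightarrow> (\<exists>\<theta>. T = TNode \<theta> TLeaf TLeaf \<and> -1 \<le> \<theta> \<and> \<theta> < 1)"
proof -
  let ?cut = "cut_cost (triad D) (triad_data D)"
  have minimal_iff: "(\<forall>\<theta>'. ?cut \<theta> \<le> ?cut \<theta>') \<longleftrightarrow> -1 \<le> \<theta> \<and> \<theta> < 1" for \<theta>
  proof
    assume "\<forall>\<theta>'. ?cut \<theta> \<le> ?cut \<theta>'"
    then have "?cut \<theta> \<le> ?cut 0" by blast
    then show "-1 \<le> \<theta> \<and> \<theta> < 1"
      using cut_cost_triad_data_eq[of 0] cut_cost_triad_data_gt[of \<theta>] by fastforce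
  next
    assume "-1 \<le> \<theta> \<and> \<theta> < 1"
    then show "\<forall>\<theta>'. ?cut \<theta> \<le> ?cut \<theta>'"
      using cut_cost_triad_data_eq cut_cost_triad_data_gt by (metis less_le_not_le nle_le)
  qed
  have "exkmc_step 3 cen (triad_data D) TLeaf T \<longleftrightarrow> (\<exists>\<theta>. T = TNode \<theta> TLeaf TLeaf \<and> (\<forall>\<theta>'. ?cut \<theta> \<le> ?cut \<theta>'))"
    unfolding exkmc_step_def exkmc_gain_triad[OF assms] by simp
  then show ?thesis using minimal_iff by simp
qed

lemma exkmc_gain_triad_left:
  assumes "cen ` {..<3} = triad D"
  shows "exkmc_gain 3 cen (triad_left D) \<theta> \<le> D^2 - 2 * D"
    and "D^2 - 2 * D \<le> exkmc_gain 3 cen (triad_left D) \<theta> \<longleftrightarrow> -D + 1 \<le> \<theta> \<and> \<theta> < -1"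
  unfolding exkmc_gain_triad[OF assms] best_center_cost_triad_left
  using cut_cost_triad_left_eq[of \<theta>] cut_cost_triad_left_gt[of \<theta>] by force+

lemma exkmc_gain_triad_right:
  assumes "cen ` {..<3} = triad D"
  shows "exkmc_gain 3 cen (triad_right D) \<theta> \<le> D^2 - 2 * D"
    and "D^2 - 2 * D \<le> exkmc_gain 3 cen (triad_right D) \<theta> \<longleftrightarrow> 1 \<le> \<theta> \<and> \<theta> < D - 1"
  unfolding exkmc_gain_triad[OF assms] best_center_cost_triad_right
  using cut_cost_triad_right_eq[of \<theta>] cut_cost_triad_right_gt[of \<theta>] by force+

lemma tleaves_triad_data_cut:
  "-1 \<le> \<theta> \<Longrightarrow> \<theta> < 1 \<Longrightarrow> tleaves (TNode \<theta> TLeaf TLeaf) (triad_data D) = [triad_left D, triad_right D]"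
  by (simp add: triad_data_cut)

lemma exkmc_second_step:
  assumes "cen ` {..<3} = triad D" "-1 \<le> \<theta>" "\<theta> < 1"
    and "exkmc_step 3 cen (triad_data D) (TNode \<theta> TLeaf TLeaf) T"
  shows "\<exists>\<theta>'. T = TNode \<theta> (TNode \<theta>' TLeaf TLeaf) TLeaf \<and> -D + 1 \<le> \<theta>' \<and> \<theta>' < -1
           \<or> T = TNode \<theta> TLeaf (TNode \<theta>' TLeaf TLeaf) \<and> 1 \<le> \<theta>' \<and> \<theta>' < D - 1"
proof -
  let ?gain = "\<lambda>i. exkmc_gain 3 cen ([triad_left D, triad_right D] ! i)"
  have two_leaves: "nleaves (TNode \<theta> TLeaf TLeaf) = 2" by simp
  obtain i \<theta>' where i: "i < 2" "T = repl (TNode \<theta> TLeaf TLeaf) i \<theta>'"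
    and maximal: "\<And>i' \<theta>''. i' < 2 \<Longrightarrow> ?gain i' \<theta>'' \<le> ?gain i \<theta>'"
    using assms(4) unfolding exkmc_step_def tleaves_triad_data_cut[OF assms(2,3)] two_leaves
    by blast
  have "D^2 - 2 * D \<le> ?gain 0 (-2)"
    using exkmc_gain_triad_left(2)[OF assms(1)] D_ge by simp
  then have "D^2 - 2 * D \<le> ?gain i \<theta>'" using maximal[of 0 "-2"] by simp
  moreover have "i = 0 \<or> i = 1" using i(1) by linarith
  ultimately show ?thesis
    using i(2) exkmc_gain_triad_left(2)[OF assms(1)] exkmc_gain_triad_right(2)[OF assms(1)] by auto
qed

lemma exkmc_second_step_exists:
  assumes "cen ` {..<3} = triad D" "-1 \<le> \<theta>" "\<theta> < 1"
  shows "exkmc_step 3 cen (triad_data D) (TNode \<theta> TLeaf TLeaf) (TNode \<theta> (TNode (-2) TLeaf TLeaf) TLeaf)"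
proof -
  have "exkmc_gain 3 cen ([triad_left D, triad_right D] ! i') \<theta>'' \<le> exkmc_gain 3 cen (triad_left D) (-2)"
    if "i' < 2" for i' \<theta>''
  proof -
    have "exkmc_gain 3 cen ([triad_left D, triad_right D] ! i') \<theta>'' \<le> D^2 - 2 * D"
      using that exkmc_gain_triad_left(1)[OF assms(1)] exkmc_gain_triad_right(1)[OF assms(1)]
      by (cases i') auto
    also have "\<dots> \<le> exkmc_gain 3 cen (triad_left D) (-2)"
      using exkmc_gain_triad_left(2)[OF assms(1)] D_ge by simp
    finally show ?thesis .
  qed
  then show ?thesis
    unfolding exkmc_step_def tleaves_triad_data_cut[OF assms(2,3)]
    by (intro exI[of _ 0] exI[of _ "-2"]) auto
qed

lemma cluster_cost_triad_left: "(D - 2)^2 / 2 \<le> cluster_cost (triad_left D)"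
  using cluster_cost_ge_half_sq_dist[of "triad_left D" "-1" "-D + 1"]
  by (simp add: triad_left_def power2_commute algebra_simps)

lemma cluster_cost_triad_right: "(D - 2)^2 / 2 \<le> cluster_cost (triad_right D)"
  using cluster_cost_ge_half_sq_dist[of "triad_right D" "D - 1" 1]
  by (simp add: triad_right_def algebra_simps)

lemma exkmc_tree_triad_data:
  assumes "optimal_clustering (triad_data D) 3 C"
  shows "\<exists>T. exkmc_tree (triad_data D) 3 C T"
    and "exkmc_tree (triad_data D) 3 C T \<Longrightarrow> (D - 2)^2 / 2 \<le> partition_cost (tleaves T (triad_data D))"
proof -
  let ?step = "exkmc_step 3 (\<lambda>l. mean (C l)) (triad_data D)"
  note centers = optimal_clustering_means[OF assms]
  have "?step TLeaf (TNode 0 TLeaf TLeaf)"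
    using exkmc_first_step_iff[OF centers] by auto
  moreover have "?step (TNode 0 TLeaf TLeaf) (TNode 0 (TNode (-2) TLeaf TLeaf) TLeaf)"
    using exkmc_second_step_exists[OF centers] by simp
  ultimately have "?step\<^sup>*\<^sup>* TLeaf (TNode 0 (TNode (-2) TLeaf TLeaf) TLeaf)"
    by (meson converse_rtranclp_into_rtranclp rtranclp.rtrancl_refl)
  then show "\<exists>T. exkmc_tree (triad_data D) 3 C T" unfolding exkmc_tree_def by fastforce
  assume "exkmc_tree (triad_data D) 3 C T"
  then obtain n where n: "(?step ^^ n) TLeaf T" and "nleaves T = 3"
    unfolding exkmc_tree_def rtranclp_power by blast
  then have "n = 2" using exkmc_steps_nleaves[OF n] by simp
  then obtain T1 where "?step TLeaf T1" "?step T1 T"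
    using n by (auto simp: numeral_2_eq_2 relcompp_apply)
  moreover obtain \<theta> where \<theta>: "T1 = TNode \<theta> TLeaf TLeaf" "-1 \<le> \<theta>" "\<theta> < 1"
    using exkmc_first_step_iff[OF centers] calculation(1) by blast
  ultimately obtain \<theta>' where
    "T = TNode \<theta> (TNode \<theta>' TLeaf TLeaf) TLeaf \<or> T = TNode \<theta> TLeaf (TNode \<theta>' TLeaf TLeaf)"
    using exkmc_second_step[OF centers \<theta>(2,3)] by blast
  then obtain B where "B \<in> set (tleaves T (triad_data D))" "(D - 2)^2 / 2 \<le> cluster_cost B"
    using triad_data_cut[OF \<theta>(2,3)] cluster_cost_triad_left cluster_cost_triad_right
    by (elim disjE) auto
  then show "(D - 2)^2 / 2 \<le> partition_cost (tleaves T (triad_data D))"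
    using cluster_cost_le_partition_cost order_trans by blast
qed

end

theorem theorem6:
  fixes m :: nat
  shows "\<exists>(k::nat) (X::real set). finite X \<and>
           price_expl X k = 1 \<and>
           (\<exists>C. optimal_clustering X k C) \<and>
           (\<forall>C. optimal_clustering X k C \<longrightarrow>
              (\<exists>T. imm_tree X k C T) \<and>
              (\<forall>T. imm_tree X k C T \<longrightarrow> price_ttree T X k = 1) \<and>
              (\<exists>T. exkmc_tree X k C T) \<and>
              (\<forall>T. exkmc_tree X k C T \<longrightarrow> price_ttree T X k \<ge> real m))"
proof -
  define D where "D = real m + 10"
  have D_ge: "10 \<le> D" by (simp add: D_def)
  have "(D - 2)^2 = (real m)^2 + 16 * real m + 64"
    by (simp add: D_def power2_eq_square algebra_simps)
  then have m_le: "real m \<le> (D - 2)^2 / 2 / 6" by simp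
  show ?thesis
  proof (intro exI[of _ 3] exI[of _ "triad_data D"] conjI allI impI)
    show "finite (triad_data D)" by (rule finite_triad_data)
    show "price_expl (triad_data D) 3 = 1" by (rule price_expl_triad_data[OF D_ge])
    show "\<exists>C. optimal_clustering (triad_data D) 3 C"
      using optimal_clustering_triad_clustering[OF D_ge] by blast
    fix C assume C: "optimal_clustering (triad_data D) 3 C"
    show "\<exists>T. imm_tree (triad_data D) 3 C T" by (rule imm_tree_triad_data(1)[OF D_ge C])
    show "price_ttree T (triad_data D) 3 = 1" if "imm_tree (triad_data D) 3 C T" for T
      by (rule imm_tree_triad_data(2)[OF D_ge C that])
    show "\<exists>T. exkmc_tree (triad_data D) 3 C T" by (rule exkmc_tree_triad_data(1)[OF D_ge C])
    show "real m \<le> price_ttree T (triad_data D) 3" if "exkmc_tree (triad_data D) 3 C T" for T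
      using exkmc_tree_triad_data(2)[OF D_ge C that] m_le
      unfolding price_ttree_def cost_opt_triad_data[OF D_ge] by (simp add: divide_right_mono)
  qed
qed

end
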